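(* Let $X,Y$ be Scott domains quantified, respectively, by partial metrics $p_X,p_Y$. Then the cartesian product $X\times Y$ (with the componentwise order) is quantified by the partial metric $p_{X\times Y}:=\frac12(p_X+p_Y)$, i.e. $p_{X\times Y}(\langle x,y\rangle,\langle x',y'\rangle)=\frac12\big(p_X(x,x')+p_Y(y,y')\big)$.
   Context: A partial metric (PM) on $X$ is $p:X\times X\to[0,+\infty]$ with $p(x,x)\leq p(x,y)$; $p(x,x)=p(x,y)=p(y,y)\Rightarrow x=y$; $p(x,y)=p(y,x)$; $p(x,y)\leq p(x,z)+p(z,y)-p(z,z)$. Open balls $B^p_\epsilon(x)=\{y\mid p(y,x)<p(x,x)+\epsilon\}$, and $\mathcal O_p(X)$ is the topology of unions of open balls. In a dcpo, $x\ll y$ iff every directed $\Delta$ with $y\leq\bigvee\Delta$ contains some $d\geq x$; a basis is a $B\subseteq X$ with $\{b\in B\mid b\ll x\}$ directed with join $x$ for every $x$; an element $x$ is compact if $x\ll x$. A domain is a dcpo with a countable basis; it is bounded complete if every finite subset having an upper bound has a join; it is algebraic if it has a basis of compact elements. A Scott domain is a bounded complete algebraic domain. The Scott topology $\mathcal O_\sigma(X)$ consists of upper sets $U$ with $x\in U\Rightarrow\exists y\ll x,\ y\in U$. A dcpo $X$ is quantified by $p$ if $\mathcal O_\sigma(X)=\mathcal O_p(X)$. *)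

theory Defs
  imports Main "HOL-Library.Extended_Nonnegative_Real" "HOL-Library.Product_Order"
    "HOL-Library.Countable_Set"
begin

definition is_lub :: "'a::order set \<Rightarrow> 'a \<Rightarrow> bool" where
  "is_lub D s \<longleftrightarrow> (\<forall>d\<in>D. d \<le> s) \<and> (\<forall>u. (\<forall>d\<in>D. d \<le> u) \<longrightarrow> s \<le> u)"

definition directed_set :: "'a::order set \<Rightarrow> bool" where
  "directed_set D \<longleftrightarrow> D \<noteq> {} \<and> (\<forall>a\<in>D. \<forall>b\<in>D. \<exists>c\<in>D. a \<le> c \<and> b \<le> c)"

definition is_dcpo :: "'a::order itself \<Rightarrow> bool" where
  "is_dcpo _ \<longleftrightarrow> (\<forall>D::'a set. directed_set D \<longrightarrow> (\<exists>s. is_lub D s))"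

definition way_below :: "'a::order \<Rightarrow> 'a \<Rightarrow> bool" (infix "\<lless>" 50) where
  "x \<lless> y \<longleftrightarrow> (\<forall>D s. directed_set D \<longrightarrow> is_lub D s \<longrightarrow> y \<le> s \<longrightarrow> (\<exists>d\<in>D. x \<le> d))"

definition is_basis :: "'a::order set \<Rightarrow> bool" where
  "is_basis B \<longleftrightarrow> (\<forall>x. directed_set {b\<in>B. b \<lless> x} \<and> is_lub {b\<in>B. b \<lless> x} x)"

definition compact_elem :: "'a::order \<Rightarrow> bool" where
  "compact_elem x \<longleftrightarrow> x \<lless> x"

definition is_domain :: "'a::order itself \<Rightarrow> bool" where
  "is_domain T \<longleftrightarrow> is_dcpo T \<and> (\<exists>B::'a set. countable B \<and> is_basis B)"

definition bounded_complete :: "'a::order itself \<Rightarrow> bool" where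
  "bounded_complete _ \<longleftrightarrow>
     (\<forall>F::'a set. finite F \<longrightarrow> (\<exists>u. \<forall>f\<in>F. f \<le> u) \<longrightarrow> (\<exists>s. is_lub F s))"

definition algebraic :: "'a::order itself \<Rightarrow> bool" where
  "algebraic _ \<longleftrightarrow> (\<exists>B::'a set. is_basis B \<and> (\<forall>b\<in>B. compact_elem b))"

definition scott_domain :: "'a::order itself \<Rightarrow> bool" where
  "scott_domain T \<longleftrightarrow> is_domain T \<and> bounded_complete T \<and> algebraic T"

definition scott_open :: "'a::order set \<Rightarrow> bool" where
  "scott_open U \<longleftrightarrow> (\<forall>x y. x \<in> U \<longrightarrow> x \<le> y \<longrightarrow> y \<in> U) \<and> (\<forall>x\<in>U. \<exists>y\<in>U. y \<lless> x)"

text \<open>The triangle law p(x,y) <= p(x,z)+p(z,y)-p(z,z) is stated in the subtraction-free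
  form p(x,y)+p(z,z) <= p(x,z)+p(z,y), as usual for extended values.\<close>
definition partial_metric :: "('a \<Rightarrow> 'a \<Rightarrow> ennreal) \<Rightarrow> bool" where
  "partial_metric p \<longleftrightarrow>
     (\<forall>x y. p x x \<le> p x y) \<and>
     (\<forall>x y. p x x = p x y \<and> p x y = p y y \<longrightarrow> x = y) \<and>
     (\<forall>x y. p x y = p y x) \<and>
     (\<forall>x y z. p x y + p z z \<le> p x z + p z y)"

definition pm_ball :: "('a \<Rightarrow> 'a \<Rightarrow> ennreal) \<Rightarrow> 'a \<Rightarrow> real \<Rightarrow> 'a set" where
  "pm_ball p x \<epsilon> = {y. p y x < p x x + ennreal \<epsilon>}"

definition pm_open :: "('a \<Rightarrow> 'a \<Rightarrow> ennreal) \<Rightarrow> 'a set \<Rightarrow> bool" where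
  "pm_open p U \<longleftrightarrow> (\<exists>\<B>. \<B> \<subseteq> {pm_ball p x \<epsilon> | x \<epsilon>. \<epsilon> > 0} \<and> U = \<Union>\<B>)"

definition quantified_by :: "('a::order \<Rightarrow> 'a \<Rightarrow> ennreal) \<Rightarrow> bool" where
  "quantified_by p \<longleftrightarrow> (\<forall>U. scott_open U \<longleftrightarrow> pm_open p U)"

end

theory Submission
  imports Defs
begin

text \<open>Both topologies on X \<times> Y are the product topologies of the factors. On the Scott side,
  way-below is computed componentwise, so rectangles of Scott-open sets are Scott open; conversely,
  algebraicity puts a pair (c, d) of compact elements below any point of a Scott-open set, and the
  rectangle \<up>c \<times> \<up>d is then a Scott-open neighbourhood of the point inside the set. On the metric
  side, the ball of radius e of the averaged metric around (x, y) lies between the rectangle of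
  e-balls and the rectangle of 2e-balls around x and y, and balls can be recentred at each of their
  points. As each factor is quantified, the two product topologies coincide. Self-distances are
  finite because UNIV is Scott open in a domain; this is what the separation axiom of the average
  needs.\<close>

section \<open>The Scott topology of a product\<close>

lemma directed_set_image_mono: "mono f \<Longrightarrow> directed_set D \<Longrightarrow> directed_set (f ` D)"
  unfolding directed_set_def mono_def by blast

lemma is_lub_fst_image:
  assumes "is_lub D s"
  shows "is_lub (fst ` D) (fst s)"
proof -
  have "fst s \<le> u" if "\<forall>d\<in>D. fst d \<le> u" for u
  proof -
    have "\<forall>d\<in>D. d \<le> (u, snd s)"
      using assms that unfolding is_lub_def less_eq_prod_def by auto
    then show ?thesis
      using assms unfolding is_lub_def less_eq_prod_def by fastforce
  qed
  then show ?thesis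
    using assms unfolding is_lub_def less_eq_prod_def by auto
qed

lemma is_lub_snd_image:
  assumes "is_lub D s"
  shows "is_lub (snd ` D) (snd s)"
proof -
  have "snd s \<le> u" if "\<forall>d\<in>D. snd d \<le> u" for u
  proof -
    have "\<forall>d\<in>D. d \<le> (fst s, u)"
      using assms that unfolding is_lub_def less_eq_prod_def by auto
    then show ?thesis
      using assms unfolding is_lub_def less_eq_prod_def by fastforce
  qed
  then show ?thesis
    using assms unfolding is_lub_def less_eq_prod_def by auto
qed

lemma directed_set_Times:
  assumes "directed_set A" "directed_set B"
  shows "directed_set (A \<times> B)"
  unfolding directed_set_def
proof (intro conjI ballI)
  show "A \<times> B \<noteq> {}"
    using assms unfolding directed_set_def by blast
  fix p q assume "p \<in> A \<times> B" "q \<in> A \<times> B"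
  then have "fst p \<in> A" "fst q \<in> A" "snd p \<in> B" "snd q \<in> B"
    by auto
  then obtain a b where "a \<in> A" "fst p \<le> a" "fst q \<le> a" "b \<in> B" "snd p \<le> b" "snd q \<le> b"
    using assms unfolding directed_set_def by meson
  then show "\<exists>c\<in>A \<times> B. p \<le> c \<and> q \<le> c"
    by (auto simp: less_eq_prod_def)
qed

lemma is_lub_Times:
  assumes "is_lub A x" "is_lub B y" "A \<noteq> {}" "B \<noteq> {}"
  shows "is_lub (A \<times> B) (x, y)"
proof -
  have "x \<le> fst u \<and> y \<le> snd u" if u: "\<forall>d\<in>A \<times> B. d \<le> u" for u
  proof -
    obtain a0 b0 where "a0 \<in> A" "b0 \<in> B"
      using assms(3,4) by blast
    then have "\<forall>a\<in>A. a \<le> fst u" "\<forall>b\<in>B. b \<le> snd u"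
      using u by (auto simp: less_eq_prod_def)
    then show ?thesis
      using assms(1,2) unfolding is_lub_def by blast
  qed
  then show ?thesis
    using assms unfolding is_lub_def less_eq_prod_def by auto
qed

lemma way_below_le:
  assumes "c \<lless> x"
  shows "c \<le> x"
proof -
  have "directed_set {x}" "is_lub {x} x"
    unfolding directed_set_def is_lub_def by auto
  then show ?thesis
    using assms unfolding way_below_def by blast
qed

lemma way_below_le_trans: "c \<lless> x \<Longrightarrow> x \<le> y \<Longrightarrow> c \<lless> y"
  unfolding way_below_def by (meson order_trans)

lemma way_below_Pair:
  assumes a: "a \<lless> x" and b: "b \<lless> y"
  shows "(a, b) \<lless> (x, y)"
  unfolding way_below_def
proof (intro allI impI)
  fix D s assume D: "directed_set D" and s: "is_lub D s" and "(x, y) \<le> s"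
  then have "x \<le> fst s" "y \<le> snd s" by (simp_all add: less_eq_prod_def)
  obtain d1 where "d1 \<in> D" "a \<le> fst d1"
    using a \<open>x \<le> fst s\<close> directed_set_image_mono[OF monoI[of fst, OF fst_mono] D] is_lub_fst_image[OF s]
    unfolding way_below_def by blast
  moreover obtain d2 where "d2 \<in> D" "b \<le> snd d2"
    using b \<open>y \<le> snd s\<close> directed_set_image_mono[OF monoI[of snd, OF snd_mono] D] is_lub_snd_image[OF s]
    unfolding way_below_def by blast
  ultimately obtain d where "d \<in> D" "d1 \<le> d" "d2 \<le> d"
    using D unfolding directed_set_def by blast
  with \<open>a \<le> fst d1\<close> \<open>b \<le> snd d2\<close> show "\<exists>d\<in>D. (a, b) \<le> d"
    by (auto simp: less_eq_prod_def intro: order_trans)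
qed

lemma scott_open_Times:
  assumes "scott_open A" "scott_open B"
  shows "scott_open (A \<times> B)"
  unfolding scott_open_def
proof (intro conjI allI impI ballI)
  fix z z' assume "z \<in> A \<times> B" "z \<le> z'"
  then show "z' \<in> A \<times> B"
    using assms unfolding scott_open_def mem_Times_iff less_eq_prod_def by blast
next
  fix z assume "z \<in> A \<times> B"
  then obtain a b where "a \<in> A" "a \<lless> fst z" "b \<in> B" "b \<lless> snd z"
    using assms unfolding scott_open_def mem_Times_iff by blast
  then show "\<exists>w\<in>A \<times> B. w \<lless> z"
    using way_below_Pair[of a "fst z" b "snd z"] by auto
qed

lemma scott_open_atLeast: "compact_elem c \<Longrightarrow> scott_open {c..}"
  unfolding scott_open_def compact_elem_def by (auto intro: way_below_le_trans order_trans)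

lemma scott_open_UNIV:
  assumes "is_domain TYPE('a::order)"
  shows "scott_open (UNIV :: 'a set)"
proof -
  obtain B :: "'a set" where "is_basis B"
    using assms unfolding is_domain_def by blast
  then have "\<exists>b. b \<lless> x" for x :: 'a
    unfolding is_basis_def directed_set_def by blast
  then show ?thesis
    unfolding scott_open_def by blast
qed

lemma scott_open_upward: "scott_open U \<Longrightarrow> x \<in> U \<Longrightarrow> x \<le> y \<Longrightarrow> y \<in> U"
  unfolding scott_open_def by blast

lemma scott_open_way_below: "scott_open U \<Longrightarrow> x \<in> U \<Longrightarrow> \<exists>y\<in>U. y \<lless> x"
  unfolding scott_open_def by blast

definition product_open :: "('a set \<Rightarrow> bool) \<Rightarrow> ('b set \<Rightarrow> bool) \<Rightarrow> ('a \<times> 'b) set \<Rightarrow> bool" where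
  "product_open openA openB W \<longleftrightarrow> (\<forall>z\<in>W. \<exists>A B. openA A \<and> openB B \<and> z \<in> A \<times> B \<and> A \<times> B \<subseteq> W)"

lemma product_openE:
  assumes "product_open openA openB W" "z \<in> W"
  obtains A B where "openA A" "openB B" "z \<in> A \<times> B" "A \<times> B \<subseteq> W"
  using assms unfolding product_open_def by metis

lemma scott_open_if_product_open:
  assumes W: "product_open scott_open scott_open W"
  shows "scott_open W"
  unfolding scott_open_def
proof (intro conjI allI impI ballI)
  fix z z' assume z: "z \<in> W" and "z \<le> z'"
  obtain A B where "scott_open A" "scott_open B" "z \<in> A \<times> B" "A \<times> B \<subseteq> W"
    using W z by (rule product_openE)
  then have "z' \<in> A \<times> B"
    using scott_open_upward[OF scott_open_Times] \<open>z \<le> z'\<close> by blast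
  with \<open>A \<times> B \<subseteq> W\<close> show "z' \<in> W" ..
next
  fix z assume z: "z \<in> W"
  obtain A B where "scott_open A" "scott_open B" "z \<in> A \<times> B" "A \<times> B \<subseteq> W"
    using W z by (rule product_openE)
  then obtain w where "w \<in> A \<times> B" "w \<lless> z"
    using scott_open_way_below[OF scott_open_Times] by blast
  with \<open>A \<times> B \<subseteq> W\<close> show "\<exists>w\<in>W. w \<lless> z" by blast
qed

lemma compact_Pair_below_in_scott_open:
  assumes "algebraic TYPE('a::order)" "algebraic TYPE('b::order)"
    and W: "scott_open (W :: ('a \<times> 'b) set)" and "(x, y) \<in> W"
  obtains c d where "compact_elem c" "compact_elem d" "c \<le> x" "d \<le> y" "(c, d) \<in> W"
proof -
  obtain BX :: "'a set" where BX: "is_basis BX" "\<forall>b\<in>BX. compact_elem b"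
    using assms(1) unfolding algebraic_def by blast
  obtain BY :: "'b set" where BY: "is_basis BY" "\<forall>b\<in>BY. compact_elem b"
    using assms(2) unfolding algebraic_def by blast
  define CX where "CX = {b\<in>BX. b \<lless> x}"
  define CY where "CY = {b\<in>BY. b \<lless> y}"
  have CX: "directed_set CX" "is_lub CX x" and CY: "directed_set CY" "is_lub CY y"
    using BX(1) BY(1) unfolding is_basis_def CX_def CY_def by auto
  then have "CX \<noteq> {}" "CY \<noteq> {}"
    unfolding directed_set_def by auto
  obtain w where "w \<in> W" "w \<lless> (x, y)"
    using scott_open_way_below[OF W \<open>(x, y) \<in> W\<close>] by blast
  moreover note directed_set_Times[OF CX(1) CY(1)]
    is_lub_Times[OF CX(2) CY(2) \<open>CX \<noteq> {}\<close> \<open>CY \<noteq> {}\<close>]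
  ultimately obtain p where "p \<in> CX \<times> CY" "w \<le> p"
    unfolding way_below_def by blast
  then obtain c d where cd: "c \<in> CX" "d \<in> CY" "w \<le> (c, d)"
    by auto
  show thesis
  proof
    show "compact_elem c" "compact_elem d" "c \<le> x" "d \<le> y"
      using cd(1,2) BX(2) BY(2) way_below_le unfolding CX_def CY_def by auto
    show "(c, d) \<in> W"
      using scott_open_upward[OF W \<open>w \<in> W\<close> cd(3)] .
  qed
qed

lemma scott_open_iff_product_open:
  assumes "algebraic TYPE('a::order)" "algebraic TYPE('b::order)"
  shows "scott_open (W :: ('a \<times> 'b) set) \<longleftrightarrow> product_open scott_open scott_open W"
proof
  assume W: "scott_open W"
  show "product_open scott_open scott_open W"
    unfolding product_open_def
  proof
    fix z assume "z \<in> W"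
    then obtain c d where cd: "compact_elem c" "compact_elem d" "c \<le> fst z" "d \<le> snd z" "(c, d) \<in> W"
      using compact_Pair_below_in_scott_open[OF assms W, of "fst z" "snd z"] by auto
    have "{c..} \<times> {d..} \<subseteq> W"
    proof
      fix w assume "w \<in> {c..} \<times> {d..}"
      then have "(c, d) \<le> w"
        by (auto simp: less_eq_prod_def)
      then show "w \<in> W"
        by (rule scott_open_upward[OF W cd(5)])
    qed
    moreover have "z \<in> {c..} \<times> {d..}"
      using cd(3,4) by (simp add: mem_Times_iff)
    ultimately show "\<exists>A B. scott_open A \<and> scott_open B \<and> z \<in> A \<times> B \<and> A \<times> B \<subseteq> W"
      using scott_open_atLeast[OF cd(1)] scott_open_atLeast[OF cd(2)] by blast
  qed
qed (rule scott_open_if_product_open)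

section \<open>Open sets of a partial metric\<close>

lemma partial_metricD:
  assumes "partial_metric p"
  shows "p x x \<le> p x y" "p x y = p y x" "p x y + p z z \<le> p x z + p z y"
    and "p x x = p x y \<Longrightarrow> p x y = p y y \<Longrightarrow> x = y"
  using assms unfolding partial_metric_def by blast+

lemma mem_pm_ball_less_top:
  assumes p: "partial_metric p" and y: "y \<in> pm_ball p x e"
  shows "p y x < top" "p x x < top" "p y y < top"
proof -
  have "p y x < p x x + ennreal e"
    using y unfolding pm_ball_def by simp
  then show "p y x < top"
    using top_greatest by (rule less_le_trans)
  then show "p x x < top" "p y y < top"
    using partial_metricD[OF p] by (metis le_less_trans)+
qed

lemma centre_in_pm_ball: "p x x < top \<Longrightarrow> 0 < e \<Longrightarrow> x \<in> pm_ball p x e"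
  unfolding pm_ball_def using ennreal_add_left_cancel_less[of "p x x" 0 "ennreal e"] by simp

lemma pm_ball_mono:
  assumes "d \<le> d'"
  shows "pm_ball p x d \<subseteq> pm_ball p x d'"
proof -
  have "p x x + ennreal d \<le> p x x + ennreal d'"
    using assms by (intro add_left_mono ennreal_leI)
  then show ?thesis
    unfolding pm_ball_def by (auto intro: less_le_trans)
qed

lemma pm_open_pm_ball: "0 < e \<Longrightarrow> pm_open p (pm_ball p x e)"
  unfolding pm_open_def by (rule exI[of _ "{pm_ball p x e}"]) blast

lemma pm_ball_recentre:
  assumes p: "partial_metric p" and y: "y \<in> pm_ball p x e"
  obtains d where "0 < d" "pm_ball p y d \<subseteq> pm_ball p x e"
proof -
  note fin = mem_pm_ball_less_top[OF p y]
  define r where "r = p x x + ennreal e - p y x"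
  have "p y x < p x x + ennreal e"
    using y unfolding pm_ball_def by simp
  then have r: "0 < r" "r < top" "p y x + r = p x x + ennreal e"
    using fin(2) unfolding r_def by (auto simp: diff_gr0_ennreal diff_less_top_ennreal add_diff_inverse_ennreal)
  show thesis
  proof
    show "0 < enn2real r"
      using r(1,2) by (simp add: enn2real_positive_iff)
    show "pm_ball p y (enn2real r) \<subseteq> pm_ball p x e"
    proof
      fix z assume "z \<in> pm_ball p y (enn2real r)"
      then have "p z y < p y y + r"
        using r(2) unfolding pm_ball_def by simp
      have "p z x + p y y \<le> p y x + p z y"
        using partial_metricD(3)[OF p, of z x y] by (simp add: add.commute)
      also have "\<dots> < p y x + (p y y + r)"
        using \<open>p z y < p y y + r\<close> fin(1) by (simp add: ennreal_add_left_cancel_less)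
      also have "\<dots> = p y y + (p x x + ennreal e)"
        using r(3) by (metis add.assoc add.commute)
      finally have "p y y + p z x < p y y + (p x x + ennreal e)"
        by (simp add: add.commute)
      then show "z \<in> pm_ball p x e"
        using fin(3) unfolding pm_ball_def by (simp add: ennreal_add_left_cancel_less)
    qed
  qed
qed

text \<open>A point of infinite self-distance lies in no ball, hence in no open set.\<close>

lemma pm_open_iff:
  assumes p: "partial_metric p"
  shows "pm_open p U \<longleftrightarrow> (\<forall>x\<in>U. p x x < top \<and> (\<exists>e>0. pm_ball p x e \<subseteq> U))"
proof
  assume "pm_open p U"
  then obtain \<B> where \<B>: "\<B> \<subseteq> {pm_ball p c e | c e. 0 < e}" "U = \<Union>\<B>"
    unfolding pm_open_def by blast
  show "\<forall>x\<in>U. p x x < top \<and> (\<exists>e>0. pm_ball p x e \<subseteq> U)"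
  proof
    fix x assume "x \<in> U"
    then obtain c e where "x \<in> pm_ball p c e" "pm_ball p c e \<subseteq> U"
      using \<B> by blast
    moreover obtain d where "0 < d" "pm_ball p x d \<subseteq> pm_ball p c e"
      using pm_ball_recentre[OF p \<open>x \<in> pm_ball p c e\<close>] .
    ultimately show "p x x < top \<and> (\<exists>e>0. pm_ball p x e \<subseteq> U)"
      using mem_pm_ball_less_top(3)[OF p] by blast
  qed
next
  assume R: "\<forall>x\<in>U. p x x < top \<and> (\<exists>e>0. pm_ball p x e \<subseteq> U)"
  let ?\<B> = "{pm_ball p x e | x e. 0 < e \<and> pm_ball p x e \<subseteq> U}"
  have "U \<subseteq> \<Union>?\<B>"
  proof
    fix x assume "x \<in> U"
    then obtain e where "0 < e" "pm_ball p x e \<subseteq> U" "p x x < top"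
      using R by blast
    then show "x \<in> \<Union>?\<B>"
      using centre_in_pm_ball[of p x e] by blast
  qed
  then have "U = \<Union>?\<B>"
    by blast
  moreover have "?\<B> \<subseteq> {pm_ball p x e | x e. 0 < e}"
    by blast
  ultimately show "pm_open p U"
    unfolding pm_open_def by (intro exI[of _ ?\<B>]) simp
qed

section \<open>The product partial metric\<close>

lemma ennreal_half_le_half_iff: "(a::ennreal) / 2 \<le> b / 2 \<longleftrightarrow> a \<le> b"
proof
  assume "a / 2 \<le> b / 2"
  then have "a / 2 * 2 \<le> b / 2 * 2"
    by (rule mult_right_mono) simp
  then show "a \<le> b"
    by (simp add: ennreal_divide_times)
qed (rule divide_right_mono_ennreal)

lemma ennreal_half_eq_half_iff: "(a::ennreal) / 2 = b / 2 \<longleftrightarrow> a = b"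
  by (simp add: order.eq_iff ennreal_half_le_half_iff)

lemma ennreal_add_eq_add_leD:
  fixes a b c d :: ennreal
  assumes le: "a \<le> c" "b \<le> d" and eq: "a + b = c + d" and fin: "a + b < top"
  shows "a = c" "b = d"
proof -
  have *: "a = c" if "a \<le> c" "b \<le> d" "a + b = c + d" "b < top" for a b c d :: ennreal
  proof (rule ccontr)
    assume "a \<noteq> c"
    with \<open>a \<le> c\<close> \<open>b < top\<close> have "b + a < b + c"
      unfolding ennreal_add_left_cancel_less by auto
    also have "\<dots> \<le> d + c"
      using \<open>b \<le> d\<close> by (rule add_right_mono)
    finally show False
      using \<open>a + b = c + d\<close> by (simp add: add.commute)
  qed
  have "a < top" "b < top"
    using fin by auto
  then show "a = c" "b = d"
    using *[OF le(1,2) eq] *[OF le(2,1)] eq by (simp_all add: add.commute)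
qed

lemma ennreal_less_of_add_less:
  fixes a b c d :: ennreal
  assumes "a + b < c + d" "d \<le> b" "d < top"
  shows "a < c"
proof -
  have "d + a \<le> a + b"
    using assms(2) by (simp add: add.commute add_left_mono)
  also have "\<dots> < d + c"
    using assms(1) by (simp add: add.commute)
  finally show ?thesis
    using assms(3) unfolding ennreal_add_left_cancel_less by auto
qed

definition pm_prod ::
    "('a \<Rightarrow> 'a \<Rightarrow> ennreal) \<Rightarrow> ('b \<Rightarrow> 'b \<Rightarrow> ennreal) \<Rightarrow> 'a \<times> 'b \<Rightarrow> 'a \<times> 'b \<Rightarrow> ennreal" where
  "pm_prod pX pY = (\<lambda>(x, y) (x', y'). (pX x x' + pY y y') / 2)"

lemma pm_prod_Pair [simp]: "pm_prod pX pY (x, y) (x', y') = (pX x x' + pY y y') / 2"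
  by (simp add: pm_prod_def)

lemma mem_pm_ball_pm_prod:
  "(w, v) \<in> pm_ball (pm_prod pX pY) (x, y) e \<longleftrightarrow>
     pX w x + pY v y < pX x x + pY y y + ennreal (2 * e)"
proof -
  have "ennreal e * 2 = ennreal (2 * e)"
    by (cases "0 \<le> e") (simp_all add: ennreal_mult ennreal_neg mult.commute)
  then have "((pX x x + pY y y) / 2 + ennreal e) * 2 = pX x x + pY y y + ennreal (2 * e)"
    by (simp add: distrib_right ennreal_divide_times)
  then show ?thesis
    unfolding pm_ball_def by (simp add: divide_less_ennreal)
qed

text \<open>The finiteness hypotheses cannot be dropped: if \<open>pX x x = \<infinity>\<close>, the average is \<infinity> on every
  pair of points (x, y), (x, y'), which separation would then force to coincide.\<close>

lemma partial_metric_pm_prod: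
  assumes pX: "partial_metric pX" and pY: "partial_metric pY"
    and finX: "\<And>x. pX x x < top" and finY: "\<And>y. pY y y < top"
  shows "partial_metric (pm_prod pX pY)"
proof -
  note X = partial_metricD[OF pX] and Y = partial_metricD[OF pY]
  have small: "pm_prod pX pY z z \<le> pm_prod pX pY z w" for z w
    by (cases z; cases w) (simp add: ennreal_half_le_half_iff add_mono X(1) Y(1))
  have sym: "pm_prod pX pY z w = pm_prod pX pY w z" for z w
    by (cases z; cases w) (simp add: X(2) Y(2))
  have triangle: "pm_prod pX pY z w + pm_prod pX pY u u \<le> pm_prod pX pY z u + pm_prod pX pY u w"
    for z w u
  proof (cases z; cases w; cases u)
    fix x y x' y' x'' y''
    assume "z = (x, y)" "w = (x', y')" "u = (x'', y'')"
    moreover have "(pX x x' + pY y y') + (pX x'' x'' + pY y'' y'')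
        \<le> (pX x x'' + pY y y'') + (pX x'' x' + pY y'' y')"
      using add_mono[OF X(3)[of x x' x''] Y(3)[of y y' y'']] by (simp add: ac_simps)
    ultimately show ?thesis
      by (simp add: add_divide_distrib_ennreal[symmetric] ennreal_half_le_half_iff)
  qed
  have separation: "z = w"
    if "pm_prod pX pY z z = pm_prod pX pY z w" "pm_prod pX pY z w = pm_prod pX pY w w" for z w
  proof (cases z; cases w)
    fix x y x' y'
    assume zw: "z = (x, y)" "w = (x', y')"
    with that have eq: "pX x x + pY y y = pX x x' + pY y y'" "pX x' x' + pY y' y' = pX x' x + pY y' y"
      by (simp_all add: ennreal_half_eq_half_iff X(2)[of x' x] Y(2)[of y' y])
    have fin: "pX x x + pY y y < top" "pX x' x' + pY y' y' < top"
      using finX finY by simp_all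
    note eqX = ennreal_add_eq_add_leD(1)[OF X(1) Y(1)] and eqY = ennreal_add_eq_add_leD(2)[OF X(1) Y(1)]
    have "pX x x = pX x x'" "pY y y = pY y y'"
      using eqX[OF eq(1) fin(1)] eqY[OF eq(1) fin(1)] .
    moreover have "pX x x' = pX x' x'" "pY y y' = pY y' y'"
      using eqX[OF eq(2) fin(2)] eqY[OF eq(2) fin(2)] X(2)[of x' x] Y(2)[of y' y] by simp_all
    ultimately have "x = x'" "y = y'"
      by (simp_all add: X(4) Y(4))
    then show ?thesis
      using zw by simp
  qed
  show ?thesis
    unfolding partial_metric_def using small sym triangle separation by blast
qed

lemma pm_ball_pm_prod_subset_Times:
  assumes pX: "partial_metric pX" and pY: "partial_metric pY"
    and fin: "pX x x < top" "pY y y < top"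
  shows "pm_ball (pm_prod pX pY) (x, y) e \<subseteq> pm_ball pX x (2 * e) \<times> pm_ball pY y (2 * e)"
proof clarify
  fix w v assume "(w, v) \<in> pm_ball (pm_prod pX pY) (x, y) e"
  then have lt: "pX w x + pY v y < pX x x + pY y y + ennreal (2 * e)"
    by (simp add: mem_pm_ball_pm_prod)
  have "pX x x \<le> pX w x" "pY y y \<le> pY v y"
    using partial_metricD(1,2)[OF pX, of x w] partial_metricD(1,2)[OF pY, of y v] by simp_all
  then have "pX w x < pX x x + ennreal (2 * e)" "pY v y < pY y y + ennreal (2 * e)"
    using ennreal_less_of_add_less[of "pX w x" "pY v y" "pX x x + ennreal (2 * e)" "pY y y"]
      ennreal_less_of_add_less[of "pY v y" "pX w x" "pY y y + ennreal (2 * e)" "pX x x"] lt fin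
    by (simp_all add: ac_simps)
  then show "w \<in> pm_ball pX x (2 * e) \<and> v \<in> pm_ball pY y (2 * e)"
    unfolding pm_ball_def by simp
qed

lemma Times_pm_ball_subset_pm_ball_pm_prod:
  "pm_ball pX x e \<times> pm_ball pY y e \<subseteq> pm_ball (pm_prod pX pY) (x, y) e"
proof clarify
  fix w v assume "w \<in> pm_ball pX x e" "v \<in> pm_ball pY y e"
  then have "pX w x + pY v y < (pX x x + ennreal e) + (pY y y + ennreal e)"
    unfolding pm_ball_def by (simp add: add_strict_mono)
  also have "\<dots> = pX x x + pY y y + ennreal (2 * e)"
    by (cases "0 \<le> e") (simp_all add: ennreal_neg ac_simps flip: ennreal_plus)
  finally show "(w, v) \<in> pm_ball (pm_prod pX pY) (x, y) e"
    by (simp add: mem_pm_ball_pm_prod)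
qed

lemma pm_open_pm_prod_iff:
  assumes pX: "partial_metric pX" and pY: "partial_metric pY"
    and finX: "\<And>x. pX x x < top" and finY: "\<And>y. pY y y < top"
  shows "pm_open (pm_prod pX pY) W \<longleftrightarrow> product_open (pm_open pX) (pm_open pY) W"
proof
  assume W: "pm_open (pm_prod pX pY) W"
  show "product_open (pm_open pX) (pm_open pY) W"
    unfolding product_open_def
  proof
    fix z assume "z \<in> W"
    obtain x y where z: "z = (x, y)"
      by fastforce
    obtain e where "0 < e" "pm_ball (pm_prod pX pY) z e \<subseteq> W"
      using W \<open>z \<in> W\<close> pm_open_iff[OF partial_metric_pm_prod[OF pX pY finX finY]] by blast
    show "\<exists>A B. pm_open pX A \<and> pm_open pY B \<and> z \<in> A \<times> B \<and> A \<times> B \<subseteq> W"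
    proof (intro exI conjI)
      show "pm_open pX (pm_ball pX x e)" "pm_open pY (pm_ball pY y e)"
        using \<open>0 < e\<close> by (rule pm_open_pm_ball)+
      show "z \<in> pm_ball pX x e \<times> pm_ball pY y e"
        using z centre_in_pm_ball[of pX x e] centre_in_pm_ball[of pY y e] finX finY \<open>0 < e\<close> by simp
      show "pm_ball pX x e \<times> pm_ball pY y e \<subseteq> W"
        using Times_pm_ball_subset_pm_ball_pm_prod \<open>pm_ball (pm_prod pX pY) z e \<subseteq> W\<close>
        unfolding z by (rule order_trans)
    qed
  qed
next
  assume W: "product_open (pm_open pX) (pm_open pY) W"
  show "pm_open (pm_prod pX pY) W"
    unfolding pm_open_iff[OF partial_metric_pm_prod[OF pX pY finX finY]]
  proof
    fix z assume "z \<in> W"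
    obtain x y where z: "z = (x, y)"
      by fastforce
    obtain A B where AB: "pm_open pX A" "pm_open pY B" "z \<in> A \<times> B" "A \<times> B \<subseteq> W"
      using W \<open>z \<in> W\<close> by (rule product_openE)
    have "x \<in> A" "y \<in> B"
      using AB(3) z by auto
    obtain eX where "0 < eX" "pm_ball pX x eX \<subseteq> A"
      using AB(1) \<open>x \<in> A\<close> unfolding pm_open_iff[OF pX] by blast
    obtain eY where "0 < eY" "pm_ball pY y eY \<subseteq> B"
      using AB(2) \<open>y \<in> B\<close> unfolding pm_open_iff[OF pY] by blast
    define e where "e = min eX eY / 2"
    have "2 * e \<le> eX" "2 * e \<le> eY"
      unfolding e_def by simp_all
    then have "pm_ball pX x (2 * e) \<subseteq> A" "pm_ball pY y (2 * e) \<subseteq> B"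
      using pm_ball_mono \<open>pm_ball pX x eX \<subseteq> A\<close> \<open>pm_ball pY y eY \<subseteq> B\<close> by (metis order_trans)+
    then have "pm_ball pX x (2 * e) \<times> pm_ball pY y (2 * e) \<subseteq> W"
      using AB(4) by (meson Sigma_mono order_trans)
    then have "pm_ball (pm_prod pX pY) z e \<subseteq> W"
      using pm_ball_pm_prod_subset_Times[OF pX pY finX finY] unfolding z by (rule order_trans[rotated])
    moreover have "pm_prod pX pY z z < top" "0 < e"
      using z finX finY \<open>0 < eX\<close> \<open>0 < eY\<close> unfolding e_def
      by (simp_all add: divide_less_ennreal ennreal_top_mult)
    ultimately show "pm_prod pX pY z z < top \<and> (\<exists>e>0. pm_ball (pm_prod pX pY) z e \<subseteq> W)"
      by blast
  qed
qed

lemma quantified_by_diag_less_top: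
  fixes p :: "'a::order \<Rightarrow> 'a \<Rightarrow> ennreal"
  assumes "is_domain TYPE('a)" "partial_metric p" "quantified_by p"
  shows "p x x < top"
proof -
  have "pm_open p UNIV"
    using assms(3) scott_open_UNIV[OF assms(1)] unfolding quantified_by_def by blast
  then show ?thesis
    unfolding pm_open_iff[OF assms(2)] by blast
qed

theorem mainTheorem6:
  fixes pX :: "'a::order \<Rightarrow> 'a \<Rightarrow> ennreal" and pY :: "'b::order \<Rightarrow> 'b \<Rightarrow> ennreal"
  assumes "scott_domain TYPE('a)" and "scott_domain TYPE('b)"
    and "partial_metric pX" and "partial_metric pY"
    and "quantified_by pX" and "quantified_by pY"
  shows "partial_metric (\<lambda>(x::'a, y::'b) (x', y'). (pX x x' + pY y y') / 2)
     \<and> quantified_by (\<lambda>(x::'a, y::'b) (x', y'). (pX x x' + pY y y') / 2)"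
proof -
  have finX: "\<And>x. pX x x < top" and finY: "\<And>y. pY y y < top"
    using quantified_by_diag_less_top assms unfolding scott_domain_def by blast+
  have "scott_open = pm_open pX" "scott_open = pm_open pY"
    using assms(5,6) unfolding quantified_by_def by auto
  then have "quantified_by (pm_prod pX pY)"
    using assms(1,2) unfolding quantified_by_def scott_domain_def
    by (simp add: scott_open_iff_product_open pm_open_pm_prod_iff[OF assms(3,4) finX finY])
  moreover have "partial_metric (pm_prod pX pY)"
    using assms(3,4) finX finY by (rule partial_metric_pm_prod)
  ultimately show ?thesis
    unfolding pm_prod_def by blast
qed

end
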